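(* Let $\mathbb X$ and $\mathbb Y$ be $L$-structures with $|X|=|Y|=\kappa\ge\omega$. Then: (I) The following are equivalent: (a) $\mathbb X\preccurlyeq_c\mathbb Y$; (b) there exists a $\kappa$-closed back and forth system $\Pi\subseteq\mathrm{PC}(\mathbb X,\mathbb Y)$; (c) player II has a winning strategy in the game $G^{\preccurlyeq_c}_\kappa(\mathbb X,\mathbb Y)$. (II) The following are equivalent: (a) $\mathbb X\sim_c\mathbb Y$; (b) there are $\kappa$-closed back and forth systems $\Pi_{\mathbb X,\mathbb Y}\subseteq\mathrm{PC}(\mathbb X,\mathbb Y)$ and $\Pi_{\mathbb Y,\mathbb X}\subseteq\mathrm{PC}(\mathbb Y,\mathbb X)$; (c) player II has winning strategies in both games $G^{\preccurlyeq_c}_\kappa(\mathbb X,\mathbb Y)$ and $G^{\preccurlyeq_c}_\kappa(\mathbb Y,\mathbb X)$.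
   Context: $L=\langle R_i:i\in I\rangle$ is a relational language, $R_i$ of arity $n_i$; for an $L$-structure $\mathbb X$ with domain $X$, $R_i^{\mathbb X}$ is the interpretation of $R_i$. For a map $f$ and tuple $\bar x=\langle x_0,\dots,x_{k-1}\rangle$ write $f\bar x=\langle f(x_0),\dots,f(x_{k-1})\rangle$. A partial condensation from $\mathbb X$ to $\mathbb Y$ is a bijection $f$ from a set $\operatorname{dom}f\subseteq X$ onto a set $\operatorname{ran}f\subseteq Y$ such that for all $i\in I$ and $\bar x\in(\operatorname{dom}f)^{n_i}$, $\bar x\in R_i^{\mathbb X}$ implies $f\bar x\in R_i^{\mathbb Y}$; $\mathrm{PC}(\mathbb X,\mathbb Y)$ is the set of these. A condensation is a partial condensation with domain $X$ and range $Y$ (a bijective homomorphism). $\mathbb X\preccurlyeq_c\mathbb Y$ means there is a condensation from $\mathbb X$ onto $\mathbb Y$; $\mathbb X\sim_c\mathbb Y$ means $\mathbb X\preccurlyeq_c\mathbb Y$ and $\mathbb Y\preccurlyeq_c\mathbb X$. A back and forth system (b.f.s.) is a nonempty $\Pi\subseteq\mathrm{PC}(\mathbb X,\mathbb Y)$ such that (e1) for all $f\in\Pi$ and $x\in X$ there is $g\in\Pi$ with $f\subseteq g$ and $x\in\operatorname{dom}g$, and (e2) for all $f\in\Pi$ and $y\in Y$ there is $g\in\Pi$ with $f\subseteq g$ and $y\in\operatorname{ran}g$. A partial order $\langle P,\le\rangle$ is $\kappa$-closed if for every ordinal $\gamma<\kappa$ and every sequence $\langle p_\alpha:\alpha<\gamma\rangle$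 in $P$ with $p_\beta\le p_\alpha$ whenever $\alpha<\beta<\gamma$, there is $p\in P$ with $p\le p_\alpha$ for all $\alpha<\gamma$. A b.f.s. $\Pi$ is $\kappa$-closed if $\langle\Pi,\supseteq\rangle$ is $\kappa$-closed. For a cardinal $\kappa$, the game $G^{\preccurlyeq_c}_\kappa(\mathbb X,\mathbb Y)$ has steps indexed by $\alpha<\kappa$; at step $\alpha$ player I either chooses $x_\alpha\in X$ and then player II chooses $y_\alpha\in Y$, or player I chooses $y_\alpha\in Y$ and then II chooses $x_\alpha\in X$. Player II wins the play iff $\{\langle x_\alpha,y_\alpha\rangle:\alpha<\kappa\}\in\mathrm{PC}(\mathbb X,\mathbb Y)$; otherwise I wins. A strategy for II determines its move from the sequence of previous moves and I's current choice; it is winning if II wins every play in which it is followed. *)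

theory Defs
  imports Main
begin

text \<open>Relational language: index type 'i, arity function n. An L-structure is a
domain X together with interpretations R i, each a set of n i-tuples (lists of
length n i) over X.\<close>

definition is_struct :: "('i \<Rightarrow> nat) \<Rightarrow> 'a set \<Rightarrow> ('i \<Rightarrow> 'a list set) \<Rightarrow> bool" where
  "is_struct n X R \<longleftrightarrow> (\<forall>i. R i \<subseteq> {xs. length xs = n i \<and> set xs \<subseteq> X})"

text \<open>Partial condensations, represented as their graphs (sets of pairs).\<close>

definition PC :: "('i \<Rightarrow> nat) \<Rightarrow> 'a set \<Rightarrow> ('i \<Rightarrow> 'a list set) \<Rightarrow> 'b set \<Rightarrow> ('i \<Rightarrow> 'b list set)
    \<Rightarrow> ('a \<times> 'b) set set" where
  "PC n X RX Y RY = {f. f \<subseteq> X \<times> Y \<and> single_valued f \<and> single_valued (converse f) \<and>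
     (\<forall>i xs ys. length xs = n i \<and> list_all2 (\<lambda>x y. (x, y) \<in> f) xs ys \<and> xs \<in> RX i
        \<longrightarrow> ys \<in> RY i)}"

definition condensation :: "('i \<Rightarrow> nat) \<Rightarrow> 'a set \<Rightarrow> ('i \<Rightarrow> 'a list set) \<Rightarrow> 'b set \<Rightarrow> ('i \<Rightarrow> 'b list set)
    \<Rightarrow> ('a \<times> 'b) set \<Rightarrow> bool" where
  "condensation n X RX Y RY f \<longleftrightarrow> f \<in> PC n X RX Y RY \<and> Domain f = X \<and> Range f = Y"

definition cond_le :: "('i \<Rightarrow> nat) \<Rightarrow> 'a set \<Rightarrow> ('i \<Rightarrow> 'a list set) \<Rightarrow> 'b set \<Rightarrow> ('i \<Rightarrow> 'b list set)
    \<Rightarrow> bool" where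
  "cond_le n X RX Y RY \<longleftrightarrow> (\<exists>f. condensation n X RX Y RY f)"

definition cond_eq :: "('i \<Rightarrow> nat) \<Rightarrow> 'a set \<Rightarrow> ('i \<Rightarrow> 'a list set) \<Rightarrow> 'b set \<Rightarrow> ('i \<Rightarrow> 'b list set)
    \<Rightarrow> bool" where
  "cond_eq n X RX Y RY \<longleftrightarrow> cond_le n X RX Y RY \<and> cond_le n Y RY X RX"

definition bfs :: "('i \<Rightarrow> nat) \<Rightarrow> 'a set \<Rightarrow> ('i \<Rightarrow> 'a list set) \<Rightarrow> 'b set \<Rightarrow> ('i \<Rightarrow> 'b list set)
    \<Rightarrow> ('a \<times> 'b) set set \<Rightarrow> bool" where
  "bfs n X RX Y RY \<Pi> \<longleftrightarrow> \<Pi> \<noteq> {} \<and> \<Pi> \<subseteq> PC n X RX Y RY \<and>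
     (\<forall>f\<in>\<Pi>. \<forall>x\<in>X. \<exists>g\<in>\<Pi>. f \<subseteq> g \<and> x \<in> Domain g) \<and>
     (\<forall>f\<in>\<Pi>. \<forall>y\<in>Y. \<exists>g\<in>\<Pi>. f \<subseteq> g \<and> y \<in> Range g)"

text \<open>The cardinal \<kappa> is represented by a cardinal order (initial ordinal) k.
Ordinals \<gamma> < \<kappa> are exactly the order types of the proper initial segments
underS k \<alpha> (\<alpha> \<in> Field k), so a sequence of length \<gamma> < \<kappa> is indexed by such a
segment. kclosed k P le: the partial order (P, le) is \<kappa>-closed.\<close>

definition kclosed :: "'k rel \<Rightarrow> 'p set \<Rightarrow> ('p \<Rightarrow> 'p \<Rightarrow> bool) \<Rightarrow> bool" where
  "kclosed k P le \<longleftrightarrow> (\<forall>\<alpha>\<in>Field k. \<forall>p :: 'k \<Rightarrow> 'p.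
     (\<forall>\<beta>\<in>underS k \<alpha>. p \<beta> \<in> P) \<and>
     (\<forall>\<beta>\<in>underS k \<alpha>. \<forall>\<gamma>\<in>underS k \<alpha>. (\<beta>, \<gamma>) \<in> k \<and> \<beta> \<noteq> \<gamma> \<longrightarrow> le (p \<gamma>) (p \<beta>))
     \<longrightarrow> (\<exists>q\<in>P. \<forall>\<beta>\<in>underS k \<alpha>. le q (p \<beta>)))"

definition closed_bfs :: "'k rel \<Rightarrow> ('i \<Rightarrow> nat) \<Rightarrow> 'a set \<Rightarrow> ('i \<Rightarrow> 'a list set) \<Rightarrow> 'b set
    \<Rightarrow> ('i \<Rightarrow> 'b list set) \<Rightarrow> ('a \<times> 'b) set set \<Rightarrow> bool" where
  "closed_bfs k n X RX Y RY \<Pi> \<longleftrightarrow> bfs n X RX Y RY \<Pi> \<and> kclosed k \<Pi> (\<lambda>f g. g \<subseteq> f)"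

text \<open>Player I's choice at step \<alpha> is c \<alpha> :: 'a + 'b
(Inl x: I chooses x \<in> X; Inr y: I chooses y \<in> Y); the pair played at step \<alpha> is
pl \<alpha> = (x_\<alpha>, y_\<alpha>). A strategy of II is a pair (sx, sy): sy answers
a choice x \<in> X with some y, sx answers a choice y \<in> Y with some x.\<close>

definition hist :: "'k rel \<Rightarrow> ('k \<Rightarrow> 'a + 'b) \<Rightarrow> ('k \<Rightarrow> 'a \<times> 'b) \<Rightarrow> 'k
    \<Rightarrow> ('k \<Rightarrow> (('a + 'b) \<times> ('a \<times> 'b)) option)" where
  "hist k c pl \<alpha> = (\<lambda>\<beta>. if \<beta> \<in> underS k \<alpha> then Some (c \<beta>, pl \<beta>) else None)"

definition follows :: "'k rel
    \<Rightarrow> ('k \<Rightarrow> ('k \<Rightarrow> (('a + 'b) \<times> ('a \<times> 'b)) option) \<Rightarrow> 'b \<Rightarrow> 'a)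
    \<Rightarrow> ('k \<Rightarrow> ('k \<Rightarrow> (('a + 'b) \<times> ('a \<times> 'b)) option) \<Rightarrow> 'a \<Rightarrow> 'b)
    \<Rightarrow> ('k \<Rightarrow> 'a + 'b) \<Rightarrow> ('k \<Rightarrow> 'a \<times> 'b) \<Rightarrow> bool" where
  "follows k sx sy c pl \<longleftrightarrow> (\<forall>\<alpha>\<in>Field k.
     pl \<alpha> = (case c \<alpha> of Inl x \<Rightarrow> (x, sy \<alpha> (hist k c pl \<alpha>) x)
                        | Inr y \<Rightarrow> (sx \<alpha> (hist k c pl \<alpha>) y, y)))"

definition legal_I :: "'k rel \<Rightarrow> 'a set \<Rightarrow> 'b set \<Rightarrow> ('k \<Rightarrow> 'a + 'b) \<Rightarrow> bool" where
  "legal_I k X Y c \<longleftrightarrow> (\<forall>\<alpha>\<in>Field k. case c \<alpha> of Inl x \<Rightarrow> x \<in> X | Inr y \<Rightarrow> y \<in> Y)"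

definition II_wins :: "'k rel \<Rightarrow> ('i \<Rightarrow> nat) \<Rightarrow> 'a set \<Rightarrow> ('i \<Rightarrow> 'a list set) \<Rightarrow> 'b set
    \<Rightarrow> ('i \<Rightarrow> 'b list set) \<Rightarrow> bool" where
  "II_wins k n X RX Y RY \<longleftrightarrow> (\<exists>sx sy. \<forall>c pl. legal_I k X Y c \<and> follows k sx sy c pl
      \<longrightarrow> pl ` Field k \<in> PC n X RX Y RY)"

end

theory Submission
  imports Defs
begin

text \<open>Enumerate the disjoint union \<open>X <+> Y\<close> in order type \<open>\<kappa>\<close>. A \<open>\<kappa>\<close>-closed back and forth
  system lets us build, by transfinite recursion along this enumeration, an increasing
  \<open>\<kappa>\<close>-sequence of partial condensations in which the \<open>\<alpha>\<close>-th one covers the \<open>\<alpha>\<close>-th element;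
  closedness supplies upper bounds at limit stages, and the union of the sequence is a
  condensation. Similarly, player II's strategy played against the enumeration produces a
  condensation. Conversely a condensation \<open>f\<close> gives the closed system \<open>{f}\<close> and the strategy
  of answering along \<open>f\<close>. Part (II) is part (I) applied in both directions.\<close>

unbundle cardinal_syntax

definition covers :: "'a + 'b \<Rightarrow> ('a \<times> 'b) set \<Rightarrow> bool" where
  "covers e f \<longleftrightarrow> (case e of Inl x \<Rightarrow> x \<in> Domain f | Inr y \<Rightarrow> y \<in> Range f)"

lemma covers_mono: "covers e g \<Longrightarrow> g \<subseteq> f \<Longrightarrow> covers e f"
  by (auto simp: covers_def split: sum.splits)

lemma condensation_if_covers:
  assumes "f \<in> PC n X RX Y RY" and "\<forall>e \<in> X <+> Y. covers e f"
  shows "condensation n X RX Y RY f"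
proof -
  have "Domain f \<subseteq> X" "Range f \<subseteq> Y" using assms(1) by (auto simp: PC_def)
  moreover have "X \<subseteq> Domain f"
  proof
    fix x assume "x \<in> X"
    then have "covers (Inl x) f" using assms(2) by blast
    then show "x \<in> Domain f" by (simp add: covers_def)
  qed
  moreover have "Y \<subseteq> Range f"
  proof
    fix y assume "y \<in> Y"
    then have "covers (Inr y) f" using assms(2) by blast
    then show "y \<in> Range f" by (simp add: covers_def)
  qed
  ultimately show ?thesis using assms(1) by (auto simp: condensation_def)
qed

lemma bfs_extend:
  assumes "bfs n X RX Y RY \<Pi>" and "f \<in> \<Pi>" and "e \<in> X <+> Y"
  shows "\<exists>g\<in>\<Pi>. f \<subseteq> g \<and> covers e g"
  using assms by (auto simp: bfs_def covers_def)

lemma PC_subset: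
  assumes "g \<subseteq> f" and "f \<in> PC n X RX Y RY"
  shows "g \<in> PC n X RX Y RY"
proof -
  have "list_all2 (\<lambda>x y. (x, y) \<in> f) xs ys" if "list_all2 (\<lambda>x y. (x, y) \<in> g) xs ys" for xs ys
    using that by (rule list_all2_mono) (use assms(1) in blast)
  moreover have "single_valued g" "single_valued (converse g)"
    using assms single_valued_subset[of g f] single_valued_subset[of "converse g" "converse f"]
    by (auto simp: PC_def)
  ultimately show ?thesis using assms unfolding PC_def by blast
qed

lemma PC_Union_chain:
  assumes "C \<noteq> {}" and ch: "subset.chain (PC n X RX Y RY) C"
  shows "\<Union>C \<in> PC n X RX Y RY"
proof -
  have CP: "C \<subseteq> PC n X RX Y RY" and tot: "\<forall>f\<in>C. \<forall>g\<in>C. f \<subseteq> g \<or> g \<subseteq> f"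
    using ch by (auto simp: subset_chain_def)
  have common: "\<exists>h\<in>C. p \<in> h \<and> q \<in> h" if "p \<in> \<Union>C" "q \<in> \<Union>C" for p q
    using that tot by blast
  have "single_valued (\<Union>C)"
  proof (rule single_valuedI)
    fix x y z assume "(x, y) \<in> \<Union>C" "(x, z) \<in> \<Union>C"
    with common obtain h where "h \<in> C" "(x, y) \<in> h" "(x, z) \<in> h" by blast
    with CP show "y = z" by (auto simp: PC_def dest: single_valuedD)
  qed
  moreover have "single_valued (converse (\<Union>C))"
  proof (rule single_valuedI)
    fix x y z assume "(x, y) \<in> converse (\<Union>C)" "(x, z) \<in> converse (\<Union>C)"
    with common obtain h where "h \<in> C" "(y, x) \<in> h" "(z, x) \<in> h" by blast
    with CP show "y = z" by (auto simp: PC_def dest: single_valuedD)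
  qed
  moreover have "ys \<in> RY i"
    if "length xs = n i" and rel: "list_all2 (\<lambda>x y. (x, y) \<in> \<Union>C) xs ys" and "xs \<in> RX i"
    for i xs ys
  proof -
    have "set (zip xs ys) \<subseteq> \<Union>C" using rel by (auto simp: list_all2_iff)
    then obtain B where B: "B \<in> C" "set (zip xs ys) \<subseteq> B"
      using finite_subset_Union_chain[OF finite_set _ assms] by blast
    then have "list_all2 (\<lambda>x y. (x, y) \<in> B) xs ys"
      using rel by (auto simp: list_all2_iff)
    with B(1) CP that show ?thesis by (auto simp: PC_def)
  qed
  moreover have "\<Union>C \<subseteq> X \<times> Y" using CP by (auto simp: PC_def)
  ultimately show ?thesis by (auto simp: PC_def)
qed

lemma subset_chain_monotone_family:
  assumes wo: "Well_order k" and "p ` Field k \<subseteq> A"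
    and mono: "\<And>\<alpha> \<beta>. \<alpha> \<in> Field k \<Longrightarrow> \<beta> \<in> underS k \<alpha> \<Longrightarrow> p \<beta> \<subseteq> p \<alpha>"
  shows "subset.chain A (p ` Field k)"
proof -
  have "p \<alpha> \<subseteq> p \<beta> \<or> p \<beta> \<subseteq> p \<alpha>" if "\<alpha> \<in> Field k" "\<beta> \<in> Field k" for \<alpha> \<beta>
  proof (cases "\<alpha> = \<beta>")
    case False
    then have "\<alpha> \<in> underS k \<beta> \<or> \<beta> \<in> underS k \<alpha>"
      using wo that unfolding underS_def well_order_on_def linear_order_on_def total_on_def
      by blast
    then show ?thesis using mono that by blast
  qed simp
  with assms(2) show ?thesis by (auto simp: subset_chain_def)
qed

lemma ex_Field_onto_Plus:
  assumes "Card_order k" "|X| =o k" "|Y| =o k" "infinite X"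
  obtains c :: "'k \<Rightarrow> 'a + 'b" where "c ` Field k = X <+> Y"
proof -
  have "|Y| \<le>o |X|"
    using assms(2,3) ordIso_iff_ordLeq by (meson ordIso_symmetric ordIso_transitive)
  then have "|X <+> Y| =o |X|" using card_of_Plus_infinite1 assms(4) by blast
  then have "|Field k| =o |X <+> Y|"
    using assms(1,2) card_of_Field_ordIso by (meson ordIso_symmetric ordIso_transitive)
  then obtain g where "bij_betw g (Field k) (X <+> Y)" using card_of_ordIso by blast
  then show ?thesis using that bij_betw_imp_surj_on by blast
qed

lemma closed_bfs_covering_sequence:
  fixes k :: "'k rel" and \<Pi> :: "('a \<times> 'b) set set"
  assumes wo: "Well_order k" and cb: "closed_bfs k n X RX Y RY \<Pi>"
    and c: "c ` Field k \<subseteq> X <+> Y"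
  obtains p where "\<And>\<alpha>. \<alpha> \<in> Field k \<Longrightarrow>
    p \<alpha> \<in> \<Pi> \<and> (\<forall>\<beta>\<in>underS k \<alpha>. p \<beta> \<subseteq> p \<alpha>) \<and> covers (c \<alpha>) (p \<alpha>)"
proof -
  have wr: "wo_rel k" using wo by (simp add: wo_rel_def)
  have bfs: "bfs n X RX Y RY \<Pi>" and kc: "kclosed k \<Pi> (\<lambda>f g. g \<subseteq> f)"
    using cb by (auto simp: closed_bfs_def)
  define ub where "ub p \<alpha> = (SOME q. q \<in> \<Pi> \<and> (\<forall>\<beta>\<in>underS k \<alpha>. p \<beta> \<subseteq> q))"
    for p :: "'k \<Rightarrow> ('a \<times> 'b) set" and \<alpha>
  define F where "F p \<alpha> = (SOME g. g \<in> \<Pi> \<and> ub p \<alpha> \<subseteq> g \<and> covers (c \<alpha>) g)" for p \<alpha>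
  have ub_cong: "ub p \<alpha> = ub p' \<alpha>" if "\<forall>\<beta>\<in>underS k \<alpha>. p \<beta> = p' \<beta>" for p p' \<alpha>
  proof -
    have "(\<lambda>q. q \<in> \<Pi> \<and> (\<forall>\<beta>\<in>underS k \<alpha>. p \<beta> \<subseteq> q)) =
          (\<lambda>q. q \<in> \<Pi> \<and> (\<forall>\<beta>\<in>underS k \<alpha>. p' \<beta> \<subseteq> q))"
      using that by auto
    then show ?thesis by (simp add: ub_def)
  qed
  have "wo_rel.adm_wo k F"
    unfolding wo_rel.adm_wo_def[OF wr] F_def using ub_cong by presburger
  then obtain p where p: "\<And>\<alpha>. p \<alpha> = F p \<alpha>"
    using wo_rel.worec_fixpoint[OF wr] by metis
  have "\<alpha> \<in> Field k \<longrightarrow>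
    p \<alpha> \<in> \<Pi> \<and> (\<forall>\<beta>\<in>underS k \<alpha>. p \<beta> \<subseteq> p \<alpha>) \<and> covers (c \<alpha>) (p \<alpha>)" for \<alpha>
  proof (induction \<alpha> rule: wo_rel.well_order_induct[OF wr])
    case (1 \<alpha>)
    show ?case
    proof
      assume \<alpha>: "\<alpha> \<in> Field k"
      have IH: "p \<beta> \<in> \<Pi> \<and> (\<forall>\<gamma>\<in>underS k \<beta>. p \<gamma> \<subseteq> p \<beta>)" if "\<beta> \<in> underS k \<alpha>" for \<beta>
        using 1 that by (auto simp: underS_def intro: FieldI1)
      have "\<forall>\<beta>\<in>underS k \<alpha>. \<forall>\<gamma>\<in>underS k \<alpha>. (\<beta>, \<gamma>) \<in> k \<and> \<beta> \<noteq> \<gamma> \<longrightarrow> p \<beta> \<subseteq> p \<gamma>"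
        using IH by (auto simp: underS_def)
      then have "\<exists>q. q \<in> \<Pi> \<and> (\<forall>\<beta>\<in>underS k \<alpha>. p \<beta> \<subseteq> q)"
        using kc \<alpha> IH unfolding kclosed_def by blast
      then have ub: "ub p \<alpha> \<in> \<Pi> \<and> (\<forall>\<beta>\<in>underS k \<alpha>. p \<beta> \<subseteq> ub p \<alpha>)"
        unfolding ub_def by (rule someI_ex)
      then have "\<exists>g. g \<in> \<Pi> \<and> ub p \<alpha> \<subseteq> g \<and> covers (c \<alpha>) g"
        using bfs_extend[OF bfs] c \<alpha> by blast
      then have "p \<alpha> \<in> \<Pi> \<and> ub p \<alpha> \<subseteq> p \<alpha> \<and> covers (c \<alpha>) (p \<alpha>)"
        unfolding p[of \<alpha>] F_def by (rule someI_ex)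
      with ub show "p \<alpha> \<in> \<Pi> \<and> (\<forall>\<beta>\<in>underS k \<alpha>. p \<beta> \<subseteq> p \<alpha>) \<and> covers (c \<alpha>) (p \<alpha>)"
        by blast
    qed
  qed
  then show ?thesis using that by blast
qed

lemma cond_le_if_closed_bfs:
  assumes wo: "Well_order k" and cb: "closed_bfs k n X RX Y RY \<Pi>"
    and c: "c ` Field k = X <+> Y" and "X \<noteq> {}"
  shows "cond_le n X RX Y RY"
proof -
  obtain p where p: "\<And>\<alpha>. \<alpha> \<in> Field k \<Longrightarrow>
      p \<alpha> \<in> \<Pi> \<and> (\<forall>\<beta>\<in>underS k \<alpha>. p \<beta> \<subseteq> p \<alpha>) \<and> covers (c \<alpha>) (p \<alpha>)"
    using closed_bfs_covering_sequence[OF wo cb equalityD1[OF c]] by blast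
  have "\<Pi> \<subseteq> PC n X RX Y RY" using cb by (simp add: closed_bfs_def bfs_def)
  then have "p ` Field k \<subseteq> PC n X RX Y RY" using p by blast
  then have "subset.chain (PC n X RX Y RY) (p ` Field k)"
    by (rule subset_chain_monotone_family[OF wo]) (use p in blast)
  moreover have "p ` Field k \<noteq> {}" using c \<open>X \<noteq> {}\<close> by auto
  ultimately have "\<Union>(p ` Field k) \<in> PC n X RX Y RY" by (intro PC_Union_chain)
  moreover have "covers (c \<alpha>) (\<Union>(p ` Field k))" if "\<alpha> \<in> Field k" for \<alpha>
    using p[OF that] covers_mono[of "c \<alpha>" "p \<alpha>"] that by blast
  then have "\<forall>e \<in> X <+> Y. covers e (\<Union>(p ` Field k))" unfolding c[symmetric] by blast
  ultimately show ?thesis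
    using condensation_if_covers unfolding cond_le_def by blast
qed

lemma cond_le_if_II_wins:
  fixes k :: "'k rel" and c :: "'k \<Rightarrow> 'a + 'b"
  assumes wo: "Well_order k" and W: "II_wins k n X RX Y RY"
    and c: "c ` Field k = X <+> Y"
  shows "cond_le n X RX Y RY"
proof -
  have wr: "wo_rel k" using wo by (simp add: wo_rel_def)
  obtain sx sy where win: "\<And>c pl. legal_I k X Y c \<and> follows k sx sy c pl
      \<Longrightarrow> pl ` Field k \<in> PC n X RX Y RY"
    using W unfolding II_wins_def by blast
  define F where "F pl \<alpha> = (case c \<alpha> of Inl x \<Rightarrow> (x, sy \<alpha> (hist k c pl \<alpha>) x)
                                    | Inr y \<Rightarrow> (sx \<alpha> (hist k c pl \<alpha>) y, y))" for pl \<alpha>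
  have hist_cong: "hist k c pl \<alpha> = hist k c pl' \<alpha>" if "\<forall>\<beta>\<in>underS k \<alpha>. pl \<beta> = pl' \<beta>" for pl pl' \<alpha>
    using that by (auto simp: hist_def)
  have "wo_rel.adm_wo k F"
    unfolding wo_rel.adm_wo_def[OF wr] F_def using hist_cong by presburger
  then obtain pl where pl: "\<And>\<alpha>. pl \<alpha> = F pl \<alpha>"
    using wo_rel.worec_fixpoint[OF wr] by metis
  have "legal_I k X Y c" unfolding legal_I_def
  proof
    fix \<alpha> assume "\<alpha> \<in> Field k"
    then have "c \<alpha> \<in> X <+> Y" using c by blast
    then show "case c \<alpha> of Inl x \<Rightarrow> x \<in> X | Inr y \<Rightarrow> y \<in> Y" by auto
  qed
  moreover have "follows k sx sy c pl" using pl by (simp add: follows_def F_def)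
  ultimately have "pl ` Field k \<in> PC n X RX Y RY" by (rule win[OF conjI])
  moreover have "covers (c \<alpha>) (pl ` Field k)" if "\<alpha> \<in> Field k" for \<alpha>
  proof (rule covers_mono)
    show "covers (c \<alpha>) {pl \<alpha>}"
      using pl[of \<alpha>] by (auto simp: covers_def F_def split: sum.splits)
  qed (use that in blast)
  then have "\<forall>e \<in> X <+> Y. covers e (pl ` Field k)" unfolding c[symmetric] by blast
  ultimately show ?thesis
    using condensation_if_covers unfolding cond_le_def by blast
qed

lemma closed_bfs_singleton:
  "condensation n X RX Y RY f \<Longrightarrow> closed_bfs k n X RX Y RY {f}"
  unfolding closed_bfs_def bfs_def kclosed_def condensation_def by auto

lemma II_wins_if_condensation:
  fixes f :: "('a \<times> 'b) set" and k :: "'k rel"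
  assumes "condensation n X RX Y RY f"
  shows "II_wins k n X RX Y RY"
proof -
  have fP: "f \<in> PC n X RX Y RY" and D: "Domain f = X" and R: "Range f = Y"
    using assms by (auto simp: condensation_def)
  have sv: "single_valued f" "single_valued (converse f)" using fP by (auto simp: PC_def)
  define sx :: "'k \<Rightarrow> ('k \<Rightarrow> (('a + 'b) \<times> ('a \<times> 'b)) option) \<Rightarrow> 'b \<Rightarrow> 'a"
    where "sx \<alpha> h y = (THE x. (x, y) \<in> f)" for \<alpha> h y
  define sy :: "'k \<Rightarrow> ('k \<Rightarrow> (('a + 'b) \<times> ('a \<times> 'b)) option) \<Rightarrow> 'a \<Rightarrow> 'b"
    where "sy \<alpha> h x = (THE y. (x, y) \<in> f)" for \<alpha> h x
  have sy_in: "(x, sy \<alpha> h x) \<in> f" if "x \<in> X" for \<alpha> h x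
  proof -
    obtain y where y: "(x, y) \<in> f" using \<open>x \<in> X\<close> D by blast
    moreover have "(THE y. (x, y) \<in> f) = y" using y sv(1) by (auto simp: single_valued_def)
    ultimately show ?thesis by (simp add: sy_def)
  qed
  have sx_in: "(sx \<alpha> h y, y) \<in> f" if "y \<in> Y" for \<alpha> h y
  proof -
    obtain x where x: "(x, y) \<in> f" using \<open>y \<in> Y\<close> R by blast
    moreover have "(THE x. (x, y) \<in> f) = x" using x sv(2) by (auto simp: single_valued_def)
    ultimately show ?thesis by (simp add: sx_def)
  qed
  have "pl \<alpha> \<in> f"
    if legal: "legal_I k X Y c" and play: "follows k sx sy c pl" and \<alpha>: "\<alpha> \<in> Field k"
    for c pl \<alpha>
  proof (cases "c \<alpha>")
    case (Inl x)
    then have "x \<in> X" "pl \<alpha> = (x, sy \<alpha> (hist k c pl \<alpha>) x)"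
      using legal play \<alpha> by (auto simp: legal_I_def follows_def)
    then show ?thesis using sy_in by simp
  next
    case (Inr y)
    then have "y \<in> Y" "pl \<alpha> = (sx \<alpha> (hist k c pl \<alpha>) y, y)"
      using legal play \<alpha> by (auto simp: legal_I_def follows_def)
    then show ?thesis using sx_in by simp
  qed
  then have "\<forall>c pl. legal_I k X Y c \<and> follows k sx sy c pl \<longrightarrow> pl ` Field k \<in> PC n X RX Y RY"
    by (blast intro: PC_subset[OF _ fP])
  then show ?thesis unfolding II_wins_def by blast
qed

lemma cond_le_characterisations:
  fixes k :: "'k rel" and X :: "'a set" and Y :: "'b set"
  assumes "Card_order k" "|X| =o k" "|Y| =o k" "infinite X"
  shows "(\<exists>\<Pi>. closed_bfs k n X RX Y RY \<Pi>) \<longleftrightarrow> cond_le n X RX Y RY"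
    and "II_wins k n X RX Y RY \<longleftrightarrow> cond_le n X RX Y RY"
proof -
  obtain c :: "'k \<Rightarrow> 'a + 'b" where c: "c ` Field k = X <+> Y"
    using ex_Field_onto_Plus[OF assms] .
  have wo: "Well_order k" using assms(1) card_order_on_well_order_on by blast
  have "X \<noteq> {}" using assms(4) by auto
  then show "(\<exists>\<Pi>. closed_bfs k n X RX Y RY \<Pi>) \<longleftrightarrow> cond_le n X RX Y RY"
    using cond_le_if_closed_bfs[OF wo _ c] closed_bfs_singleton
    unfolding cond_le_def by blast
  show "II_wins k n X RX Y RY \<longleftrightarrow> cond_le n X RX Y RY"
    using cond_le_if_II_wins[OF wo _ c] II_wins_if_condensation
    unfolding cond_le_def by blast
qed

theorem theorem3p1:
  fixes n :: "'i \<Rightarrow> nat"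
    and X :: "'a set" and RX :: "'i \<Rightarrow> 'a list set"
    and Y :: "'b set" and RY :: "'i \<Rightarrow> 'b list set"
    and k :: "'k rel"
  assumes "is_struct n X RX" and "is_struct n Y RY"
    and "Card_order k"
    and "(card_of X, k) \<in> ordIso" and "(card_of Y, k) \<in> ordIso"
    and "infinite X"
  shows "(cond_le n X RX Y RY \<longleftrightarrow> (\<exists>\<Pi>. closed_bfs k n X RX Y RY \<Pi>))
       \<and> ((\<exists>\<Pi>. closed_bfs k n X RX Y RY \<Pi>) \<longleftrightarrow> II_wins k n X RX Y RY)
       \<and> (cond_eq n X RX Y RY \<longleftrightarrow>
            (\<exists>\<Pi>1 \<Pi>2. closed_bfs k n X RX Y RY \<Pi>1 \<and> closed_bfs k n Y RY X RX \<Pi>2))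
       \<and> ((\<exists>\<Pi>1 \<Pi>2. closed_bfs k n X RX Y RY \<Pi>1 \<and> closed_bfs k n Y RY X RX \<Pi>2) \<longleftrightarrow>
            II_wins k n X RX Y RY \<and> II_wins k n Y RY X RX)"
proof -
  have "|Y| =o |X|" using assms(4,5) by (meson ordIso_symmetric ordIso_transitive)
  then have "infinite Y" using assms(6) card_of_ordIso_finite by blast
  note XY = cond_le_characterisations[OF assms(3,4,5,6), of n RX RY]
  note YX = cond_le_characterisations[OF assms(3,5,4) \<open>infinite Y\<close>, of n RY RX]
  show ?thesis using XY YX unfolding cond_eq_def by blast
qed

end
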